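(* There is a formula $\phi_{\subseteq}(X_l,X_r,Y_l,Y_r)$ in the signature of $\mathcal{W}(I)$ such that for all $A,B\in\mathcal{P}_{\mathrm{fci}}(I)$, $$A\subseteq B\iff \mathcal{W}(I)\models\phi_{\subseteq}(l(A),r(A),l(B),r(B)).$$
   Context: Let $I$ be a dense linear order with left endpoint $0$ and no right endpoint. Let $\mathcal{P}_{\mathrm{fci}}(I)$ be the set of finite unions of closed intervals $[i,j]$, $[i,+\infty)$, $(-\infty,j]$ of $I$. For $A\in\mathcal{P}_{\mathrm{fci}}(I)$, $l(A)$ and $r(A)$ are the finite sets of left and right endpoints of $A$. Left endpoints are the minima of the maximal closed intervals composing $A$, and right endpoints are the maxima of the bounded ones. $\mathcal{W}(I)$ has universe the finite subsets of $I$ and signature $\{\cup,\cap,\bot,c_0,\min,\max,\mathrm{ips}\}$, interpreted as follows. - $\cup$ and $\cap$ are union and intersection. - $\bot$ is $\emptyset$, and $c_0$ is $\{0\}$. - $\min$ and $\max$ send a nonempty set to the singleton of its minimum, respectively maximum, and fix $\emptyset$. - $\mathrm{ips}(A,B)=\{i\in A: s_A(i)\in B\}$, where $s_A$ is the successor function of $A$. *)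

theory Defs
  imports Main
begin

definition fci :: "'a::linorder set \<Rightarrow> bool" where
  "fci A \<longleftrightarrow> (\<exists>F. finite F \<and>
      (\<forall>C\<in>F. \<exists>i j. C = {i..j} \<or> C = {i..} \<or> C = {..j}) \<and> A = \<Union>F)"

definition convex_set :: "'a::linorder set \<Rightarrow> bool" where
  "convex_set C \<longleftrightarrow> (\<forall>x y z. x \<in> C \<longrightarrow> z \<in> C \<longrightarrow> x \<le> y \<longrightarrow> y \<le> z \<longrightarrow> y \<in> C)"

definition components :: "'a::linorder set \<Rightarrow> 'a set set" where
  "components A = {C. C \<noteq> {} \<and> C \<subseteq> A \<and> convex_set C \<and>
      (\<forall>D. C \<subseteq> D \<and> D \<subseteq> A \<and> convex_set D \<longrightarrow> D = C)}"

definition lends :: "'a::linorder set \<Rightarrow> 'a set" where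
  "lends A = {x. \<exists>C\<in>components A. x \<in> C \<and> (\<forall>y\<in>C. x \<le> y)}"

definition rends :: "'a::linorder set \<Rightarrow> 'a set" where
  "rends A = {x. \<exists>C\<in>components A. x \<in> C \<and> (\<forall>y\<in>C. y \<le> x)}"

datatype wterm = WVar nat | WUn wterm wterm | WInt wterm wterm | WBot | WC0
  | WMin wterm | WMax wterm | WIps wterm wterm

datatype wform = WEq wterm wterm | WFalse | WNot wform | WAnd wform wform
  | WOr wform wform | WImp wform wform | WEx nat wform | WAll nat wform

definition wmin :: "'a::linorder set \<Rightarrow> 'a set" where
  "wmin S = (if S = {} then {} else {Min S})"

definition wmax :: "'a::linorder set \<Rightarrow> 'a set" where
  "wmax S = (if S = {} then {} else {Max S})"

text \<open>ips(A,B) = {i in A. s_A(i) in B}, s_A the successor function of A.\<close>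
definition wips :: "'a::linorder set \<Rightarrow> 'a set \<Rightarrow> 'a set" where
  "wips A B = {i \<in> A. \<exists>j. j \<in> B \<and> j \<in> A \<and> i < j \<and> (\<forall>k\<in>A. i < k \<longrightarrow> j \<le> k)}"

primrec weval :: "'a::linorder \<Rightarrow> (nat \<Rightarrow> 'a set) \<Rightarrow> wterm \<Rightarrow> 'a set" where
  "weval z e (WVar n) = e n"
| "weval z e (WUn s t) = weval z e s \<union> weval z e t"
| "weval z e (WInt s t) = weval z e s \<inter> weval z e t"
| "weval z e WBot = {}"
| "weval z e WC0 = {z}"
| "weval z e (WMin t) = wmin (weval z e t)"
| "weval z e (WMax t) = wmax (weval z e t)"
| "weval z e (WIps s t) = wips (weval z e s) (weval z e t)"

primrec wsat :: "'a::linorder \<Rightarrow> (nat \<Rightarrow> 'a set) \<Rightarrow> wform \<Rightarrow> bool" where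
  "wsat z e (WEq s t) = (weval z e s = weval z e t)"
| "wsat z e WFalse = False"
| "wsat z e (WNot f) = (\<not> wsat z e f)"
| "wsat z e (WAnd f g) = (wsat z e f \<and> wsat z e g)"
| "wsat z e (WOr f g) = (wsat z e f \<or> wsat z e g)"
| "wsat z e (WImp f g) = (wsat z e f \<longrightarrow> wsat z e g)"
| "wsat z e (WEx n f) = (\<exists>S. finite S \<and> wsat z (e(n := S)) f)"
| "wsat z e (WAll n f) = (\<forall>S. finite S \<longrightarrow> wsat z (e(n := S)) f)"

definition wenv :: "'a set list \<Rightarrow> nat \<Rightarrow> 'a set" where
  "wenv xs n = (if n < length xs then xs ! n else {})"

end

theory Submission
  imports Defs
begin

text \<open>
  Over an order with a least element, every maximal interval of a finite union A of closed
  intervals has a minimum, and has a maximum unless it is a final segment. Hence A is determined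
  by its endpoints: \<open>x \<in> A\<close> iff some left endpoint \<open>l \<le> x\<close> is followed by no right endpoint in
  \<open>[l, x)\<close>. Points are the singletons of W(I), i.e. the nonempty sets fixed by min, and
  \<open>x \<le> y\<close> is expressed as \<open>min ({x} \<union> {y}) = {x}\<close>; so this membership test is a first-order
  formula in the endpoint sets, and inclusion is the formula \<open>\<forall>x. x \<in> A \<longrightarrow> x \<in> B\<close>.
\<close>

lemma convex_setD: "convex_set C \<Longrightarrow> x \<in> C \<Longrightarrow> z \<in> C \<Longrightarrow> x \<le> y \<Longrightarrow> y \<le> z \<Longrightarrow> y \<in> C"
  unfolding convex_set_def by blast

lemma convex_set_Un:
  assumes "convex_set C" "convex_set D" "w \<in> C" "w \<in> D"
  shows "convex_set (C \<union> D)"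
  unfolding convex_set_def
proof (intro allI impI)
  fix a b c assume "a \<in> C \<union> D" "c \<in> C \<union> D" "a \<le> b" "b \<le> c"
  moreover have "b \<le> w \<or> w \<le> b" by (rule linear)
  ultimately show "b \<in> C \<union> D"
    using convex_setD[OF assms(1)] convex_setD[OF assms(2)] assms(3,4) by blast
qed

lemma componentsD:
  assumes "C \<in> components A"
  shows "C \<noteq> {}" "C \<subseteq> A" "convex_set C"
    and "\<And>D. C \<subseteq> D \<Longrightarrow> D \<subseteq> A \<Longrightarrow> convex_set D \<Longrightarrow> D = C"
  using assms unfolding components_def by auto

lemma convex_subset_component:
  assumes C: "C \<in> components A" and "convex_set G" "G \<subseteq> A" "w \<in> G" "w \<in> C"
  shows "G \<subseteq> C"
proof -
  have "convex_set (C \<union> G)"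
    using convex_set_Un[OF componentsD(3)[OF C] assms(2,5,4)] .
  then have "C \<union> G = C"
    using componentsD(2)[OF C] assms(3) by (intro componentsD(4)[OF C]) auto
  then show ?thesis by blast
qed

lemma components_eq:
  assumes "C \<in> components A" "C' \<in> components A" "w \<in> C" "w \<in> C'"
  shows "C = C'"
proof
  show "C' \<subseteq> C"
    using convex_subset_component[OF assms(1) componentsD(3,2)[OF assms(2)] assms(4,3)] .
  show "C \<subseteq> C'"
    using convex_subset_component[OF assms(2) componentsD(3,2)[OF assms(1)] assms(3,4)] .
qed

lemma in_components:
  assumes "x \<in> A"
  shows "\<exists>C\<in>components A. x \<in> C"
proof -
  define C where "C = \<Union>{D. convex_set D \<and> D \<subseteq> A \<and> x \<in> D}"
  have "convex_set {x}" unfolding convex_set_def by auto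
  then have "x \<in> C" unfolding C_def using assms by blast
  have "convex_set C" unfolding convex_set_def
  proof (intro allI impI)
    fix a b c assume abc: "a \<in> C" "c \<in> C" "a \<le> b" "b \<le> c"
    then obtain D1 D2 where D: "convex_set D1" "D1 \<subseteq> A" "x \<in> D1" "a \<in> D1"
        "convex_set D2" "D2 \<subseteq> A" "x \<in> D2" "c \<in> D2"
      unfolding C_def by blast
    then have "convex_set (D1 \<union> D2)" using convex_set_Un by blast
    then have "b \<in> D1 \<union> D2" using convex_setD abc D(4,8) by blast
    moreover have "D1 \<union> D2 \<subseteq> C" unfolding C_def using D \<open>convex_set (D1 \<union> D2)\<close> by blast
    ultimately show "b \<in> C" by blast
  qed
  moreover have "D = C" if "C \<subseteq> D" "D \<subseteq> A" "convex_set D" for D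
    using that \<open>x \<in> C\<close> unfolding C_def by blast
  moreover have "C \<subseteq> A" unfolding C_def by blast
  ultimately have "C \<in> components A"
    using \<open>x \<in> C\<close> unfolding components_def by blast
  with \<open>x \<in> C\<close> show ?thesis by blast
qed

lemma component_eq_Union_meeting:
  assumes C: "C \<in> components (\<Union>F)" and convex: "\<forall>G\<in>F. convex_set G"
  shows "C = \<Union>{G\<in>F. G \<inter> C \<noteq> {}}"
proof
  show "C \<subseteq> \<Union>{G\<in>F. G \<inter> C \<noteq> {}}" using componentsD(2)[OF C] by blast
  show "\<Union>{G\<in>F. G \<inter> C \<noteq> {}} \<subseteq> C" using convex_subset_component[OF C] convex by blast
qed

lemma Union_has_least:
  fixes S :: "'a::linorder set set"
  assumes "finite S" "\<Union>S \<noteq> {}" "\<And>G. G \<in> S \<Longrightarrow> G \<noteq> {} \<Longrightarrow> \<exists>m\<in>G. \<forall>y\<in>G. m \<le> y"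
  shows "\<exists>m\<in>\<Union>S. \<forall>y\<in>\<Union>S. m \<le> y"
proof -
  let ?S = "{G\<in>S. G \<noteq> {}}"
  obtain f where f: "\<And>G. G \<in> ?S \<Longrightarrow> f G \<in> G \<and> (\<forall>y\<in>G. f G \<le> y)"
    using assms(3) by (metis (mono_tags) mem_Collect_eq)
  let ?m = "Min (f ` ?S)"
  have fin: "finite (f ` ?S)" and ne: "f ` ?S \<noteq> {}" using assms(1,2) by auto
  obtain G where G: "G \<in> ?S" "?m = f G" using Min_in[OF fin ne] by blast
  then have "?m \<in> \<Union>S" using f[OF G(1)] by auto
  moreover have "?m \<le> y" if y: "y \<in> \<Union>S" for y
  proof -
    obtain G where "G \<in> ?S" "y \<in> G" using y by blast
    then have "?m \<le> f G" "f G \<le> y" using Min_le[OF fin] f by auto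
    then show ?thesis by (rule order.trans)
  qed
  ultimately show ?thesis by blast
qed

lemma Union_has_greatest:
  fixes S :: "'a::linorder set set"
  assumes "finite S" "\<Union>S \<noteq> {}" "\<And>G. G \<in> S \<Longrightarrow> G \<noteq> {} \<Longrightarrow> \<exists>m\<in>G. \<forall>y\<in>G. y \<le> m"
  shows "\<exists>m\<in>\<Union>S. \<forall>y\<in>\<Union>S. y \<le> m"
proof -
  let ?S = "{G\<in>S. G \<noteq> {}}"
  obtain f where f: "\<And>G. G \<in> ?S \<Longrightarrow> f G \<in> G \<and> (\<forall>y\<in>G. y \<le> f G)"
    using assms(3) by (metis (mono_tags) mem_Collect_eq)
  let ?m = "Max (f ` ?S)"
  have fin: "finite (f ` ?S)" and ne: "f ` ?S \<noteq> {}" using assms(1,2) by auto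
  obtain G where G: "G \<in> ?S" "?m = f G" using Max_in[OF fin ne] by blast
  then have "?m \<in> \<Union>S" using f[OF G(1)] by auto
  moreover have "y \<le> ?m" if y: "y \<in> \<Union>S" for y
  proof -
    obtain G where "G \<in> ?S" "y \<in> G" using y by blast
    then have "y \<le> f G" "f G \<le> ?m" using Max_ge[OF fin] f by auto
    then show ?thesis by (rule order.trans)
  qed
  ultimately show ?thesis by blast
qed

definition closed_interval :: "'a::linorder set \<Rightarrow> bool" where
  "closed_interval G \<longleftrightarrow> (\<exists>i j. G = {i..j} \<or> G = {i..} \<or> G = {..j})"

lemma fci_iff: "fci A \<longleftrightarrow> (\<exists>F. finite F \<and> (\<forall>G\<in>F. closed_interval G) \<and> A = \<Union>F)"
  unfolding fci_def closed_interval_def by (rule refl)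

lemma closed_interval_cases:
  assumes "closed_interval G"
  obtains i j where "G = {i..j}" | i where "G = {i..}" | j where "G = {..j}"
  using assms unfolding closed_interval_def by blast

lemma convex_set_closed_interval:
  assumes "closed_interval G"
  shows "convex_set G"
  using assms by (cases rule: closed_interval_cases) (auto simp: convex_set_def)

lemma closed_interval_has_least:
  fixes z :: "'a::linorder" and G :: "'a set"
  assumes "\<forall>x. z \<le> x" "closed_interval G" "G \<noteq> {}"
  shows "\<exists>m\<in>G. \<forall>y\<in>G. m \<le> y"
  using assms(2)
proof (cases rule: closed_interval_cases)
  case (1 i j)
  with assms(3) show ?thesis by (intro bexI[of _ i]) auto
next
  case (2 i)
  then show ?thesis by (intro bexI[of _ i]) auto
next
  case (3 j)
  with assms(1,3) have "z \<in> G" by (auto intro: order.trans)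
  with assms(1) show ?thesis by blast
qed

lemma closed_interval_has_greatest_or_ray:
  assumes "closed_interval G" "G \<noteq> {}"
  shows "(\<exists>m\<in>G. \<forall>y\<in>G. y \<le> m) \<or> (\<exists>i. G = {i..})"
  using assms(1)
proof (cases rule: closed_interval_cases)
  case (1 i j)
  with assms(2) show ?thesis by auto
next
  case (3 j)
  then show ?thesis by auto
qed blast

lemma fci_component_eq_Union:
  assumes "fci A" "C \<in> components A"
  obtains S where "finite S" "\<forall>G\<in>S. closed_interval G \<and> G \<subseteq> C" "C = \<Union>S"
proof -
  obtain F where F: "finite F" "\<forall>G\<in>F. closed_interval G" "A = \<Union>F"
    using assms(1) unfolding fci_iff by blast
  define S where "S = {G\<in>F. G \<inter> C \<noteq> {}}"
  have "C = \<Union>S"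
    unfolding S_def using component_eq_Union_meeting assms(2) F convex_set_closed_interval by blast
  moreover have "finite S" "\<forall>G\<in>S. closed_interval G"
    unfolding S_def using F(1,2) by auto
  ultimately show ?thesis using that by blast
qed

lemma fci_component_has_least:
  fixes z :: "'a::linorder" and A :: "'a set"
  assumes "\<forall>x. z \<le> x" "fci A" "C \<in> components A"
  shows "\<exists>l\<in>C. \<forall>y\<in>C. l \<le> y"
proof -
  obtain S where S: "finite S" "\<forall>G\<in>S. closed_interval G \<and> G \<subseteq> C" "C = \<Union>S"
    using fci_component_eq_Union[OF assms(2,3)] .
  have "\<exists>l\<in>\<Union>S. \<forall>y\<in>\<Union>S. l \<le> y"
  proof (rule Union_has_least)
    show "\<Union>S \<noteq> {}" using S(3) componentsD(1)[OF assms(3)] by simp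
    show "\<exists>m\<in>G. \<forall>y\<in>G. m \<le> y" if "G \<in> S" "G \<noteq> {}" for G
      using closed_interval_has_least[OF assms(1)] S(2) that by blast
  qed (rule S(1))
  with S(3) show ?thesis by simp
qed

lemma fci_component_has_greatest_or_ray:
  assumes "fci A" "C \<in> components A"
  shows "(\<exists>m\<in>C. \<forall>y\<in>C. y \<le> m) \<or> (\<exists>i. {i..} \<subseteq> C)"
proof -
  obtain S where S: "finite S" "\<forall>G\<in>S. closed_interval G \<and> G \<subseteq> C" "C = \<Union>S"
    using fci_component_eq_Union[OF assms] .
  show ?thesis
  proof (cases "\<exists>G\<in>S. \<exists>i. G = {i..}")
    case True
    then show ?thesis using S(2) by blast
  next
    case False
    have "\<exists>m\<in>\<Union>S. \<forall>y\<in>\<Union>S. y \<le> m"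
    proof (rule Union_has_greatest)
      show "\<Union>S \<noteq> {}" using S(3) componentsD(1)[OF assms(2)] by simp
      show "\<exists>m\<in>G. \<forall>y\<in>G. y \<le> m" if "G \<in> S" "G \<noteq> {}" for G
        using closed_interval_has_greatest_or_ray S(2) False that by blast
    qed (rule S(1))
    with S(3) show ?thesis by simp
  qed
qed

lemma mem_imp_endpoints:
  assumes least: "\<And>C. C \<in> components A \<Longrightarrow> \<exists>l\<in>C. \<forall>y\<in>C. l \<le> y" and "x \<in> A"
  shows "\<exists>l\<in>lends A. l \<le> x \<and> (\<forall>r\<in>rends A. l \<le> r \<longrightarrow> x \<le> r)"
proof -
  obtain C where C: "C \<in> components A" "x \<in> C" using in_components[OF assms(2)] by blast
  obtain l where l: "l \<in> C" "\<forall>y\<in>C. l \<le> y" using least[OF C(1)] by blast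
  have "x \<le> r" if r: "r \<in> rends A" "l \<le> r" for r
  proof (rule ccontr)
    assume "\<not> x \<le> r"
    then have "r \<in> C"
      using convex_setD[OF componentsD(3)[OF C(1)] l(1) C(2) r(2)] by simp
    obtain C' where C': "C' \<in> components A" "r \<in> C'" "\<forall>y\<in>C'. y \<le> r"
      using r(1) unfolding rends_def by blast
    have "C' = C" using components_eq[OF C'(1) C(1) C'(2) \<open>r \<in> C\<close>] .
    with C'(3) C(2) \<open>\<not> x \<le> r\<close> show False by blast
  qed
  moreover have "l \<in> lends A" unfolding lends_def using C(1) l by blast
  ultimately show ?thesis using l C(2) by blast
qed

lemma endpoints_imp_mem:
  assumes greatest_or_ray:
      "\<And>C. C \<in> components A \<Longrightarrow> (\<exists>m\<in>C. \<forall>y\<in>C. y \<le> m) \<or> (\<exists>i. {i..} \<subseteq> C)"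
    and l: "l \<in> lends A" "l \<le> x" "\<forall>r\<in>rends A. l \<le> r \<longrightarrow> x \<le> r"
  shows "x \<in> A"
proof -
  obtain C where C: "C \<in> components A" "l \<in> C" "\<forall>y\<in>C. l \<le> y"
    using l(1) unfolding lends_def by blast
  obtain u where "u \<in> C" "x \<le> u"
  proof (cases "\<exists>m\<in>C. \<forall>y\<in>C. y \<le> m")
    case True
    then obtain m where m: "m \<in> C" "\<forall>y\<in>C. y \<le> m" by blast
    then have "m \<in> rends A" unfolding rends_def using C(1) by blast
    with l(3) C(2,3) m show ?thesis using that by blast
  next
    case False
    then obtain i where "{i..} \<subseteq> C" using greatest_or_ray[OF C(1)] by blast
    then have "max i x \<in> C" by auto
    then show ?thesis using that by simp
  qed
  then have "x \<in> C" using convex_setD[OF componentsD(3)[OF C(1)] C(2)] l(2) by blast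
  then show ?thesis using componentsD(2)[OF C(1)] by blast
qed

lemma fci_mem_iff_endpoints:
  fixes z :: "'a::linorder" and A :: "'a set"
  assumes "\<forall>x. z \<le> x" "fci A"
  shows "x \<in> A \<longleftrightarrow> (\<exists>l\<in>lends A. l \<le> x \<and> (\<forall>r\<in>rends A. l \<le> r \<longrightarrow> x \<le> r))"
  using mem_imp_endpoints[OF fci_component_has_least[OF assms]]
    endpoints_imp_mem[OF fci_component_has_greatest_or_ray[OF assms(2)]]
  by blast

definition wsingleton :: "nat \<Rightarrow> wform" where
  "wsingleton n = WAnd (WNot (WEq (WVar n) WBot)) (WEq (WMin (WVar n)) (WVar n))"

definition wall_point :: "nat \<Rightarrow> wform \<Rightarrow> wform" where
  "wall_point n P = WAll n (WImp (wsingleton n) P)"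

definition wex_point :: "nat \<Rightarrow> wform \<Rightarrow> wform" where
  "wex_point n P = WEx n (WAnd (wsingleton n) P)"

definition wle :: "nat \<Rightarrow> nat \<Rightarrow> wform" where
  "wle m n = WEq (WMin (WUn (WVar m) (WVar n))) (WVar m)"

definition wsubseteq :: "nat \<Rightarrow> nat \<Rightarrow> wform" where
  "wsubseteq m n = WEq (WInt (WVar m) (WVar n)) (WVar m)"

definition wmem_endpoints :: "nat \<Rightarrow> nat \<Rightarrow> nat \<Rightarrow> wform" where
  "wmem_endpoints X L R = wex_point 5 (WAnd (WAnd (wsubseteq 5 L) (wle 5 X))
      (wall_point 6 (WImp (WAnd (wsubseteq 6 R) (wle 5 6)) (wle X 6))))"

definition wsubset_formula :: wform where
  "wsubset_formula = wall_point 4 (WImp (wmem_endpoints 4 0 1) (wmem_endpoints 4 2 3))"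

lemma wsat_wsingleton: "wsat z e (wsingleton n) \<longleftrightarrow> (\<exists>x. e n = {x})"
proof
  assume "wsat z e (wsingleton n)"
  then have "e n \<noteq> {}" "wmin (e n) = e n" by (simp_all add: wsingleton_def)
  then have "e n = {Min (e n)}" unfolding wmin_def by simp
  then show "\<exists>x. e n = {x}" ..
next
  assume "\<exists>x. e n = {x}"
  then obtain x where "e n = {x}" ..
  then show "wsat z e (wsingleton n)" by (simp add: wsingleton_def wmin_def)
qed

lemma wsat_wall_point: "wsat z e (wall_point n P) \<longleftrightarrow> (\<forall>x. wsat z (e(n := {x})) P)"
  unfolding wall_point_def wsat.simps wsat_wsingleton fun_upd_same
  by (metis finite.emptyI finite_insert)

lemma wsat_wex_point: "wsat z e (wex_point n P) \<longleftrightarrow> (\<exists>x. wsat z (e(n := {x})) P)"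
  unfolding wex_point_def wsat.simps wsat_wsingleton fun_upd_same
  by (metis finite.emptyI finite_insert)

lemma wsat_wle: "e m = {x} \<Longrightarrow> e n = {y} \<Longrightarrow> wsat z e (wle m n) \<longleftrightarrow> x \<le> y"
  by (cases "x \<le> y") (simp_all add: wle_def wmin_def insert_commute min_def)

lemma wsat_wsubseteq: "wsat z e (wsubseteq m n) \<longleftrightarrow> e m \<subseteq> e n"
  by (auto simp: wsubseteq_def)

lemma wsat_wmem_endpoints:
  assumes "e X = {x}" "X \<notin> {5, 6}" "L \<notin> {5, 6}" "R \<notin> {5, 6}"
  shows "wsat z e (wmem_endpoints X L R) \<longleftrightarrow> (\<exists>l\<in>e L. l \<le> x \<and> (\<forall>r\<in>e R. l \<le> r \<longrightarrow> x \<le> r))"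
  using assms unfolding wmem_endpoints_def
  by (simp add: wsat_wex_point wsat_wall_point wsat_wle wsat_wsubseteq Bex_def Ball_def imp_conjL)

theorem proposition6p3:
  fixes z :: "'a::linorder"
  assumes dense: "\<forall>x y::'a. x < y \<longrightarrow> (\<exists>w. x < w \<and> w < y)"
    and left_endpoint: "\<forall>x. z \<le> x"
    and no_right_endpoint: "\<forall>x::'a. \<exists>y. x < y"
  shows "\<exists>\<phi>. \<forall>A B :: 'a set. fci A \<longrightarrow> fci B \<longrightarrow>
           (A \<subseteq> B \<longleftrightarrow> wsat z (wenv [lends A, rends A, lends B, rends B]) \<phi>)"
proof (rule exI[of _ wsubset_formula], intro allI impI)
  fix A B :: "'a set"
  assume "fci A" "fci B"
  let ?e = "wenv [lends A, rends A, lends B, rends B]"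
  have "wsat z (?e(4 := {x})) (wmem_endpoints 4 0 1) \<longleftrightarrow> x \<in> A" for x
    using fci_mem_iff_endpoints[OF left_endpoint \<open>fci A\<close>]
    by (subst wsat_wmem_endpoints) (simp_all add: wenv_def)
  moreover have "wsat z (?e(4 := {x})) (wmem_endpoints 4 2 3) \<longleftrightarrow> x \<in> B" for x
    using fci_mem_iff_endpoints[OF left_endpoint \<open>fci B\<close>]
    by (subst wsat_wmem_endpoints) (simp_all add: wenv_def)
  ultimately show "A \<subseteq> B \<longleftrightarrow> wsat z ?e wsubset_formula"
    unfolding wsubset_formula_def wsat_wall_point by auto
qed

end
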